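(* For conjunctive guarded systems of type $(A,B)$ and every LTL formula without the next operator $h(A,B_1)$: for all $n\ge1$, if some unconditionally fair initializing run of $(A,B)^{(1,n)}$ satisfies $h(A,B_1)$, then some unconditionally fair initializing run of $(A,B)^{(1,1)}$ satisfies $h(A,B_1)$.
   Context: A process template is $U=(Q_U,\mathit{init}_U,\Sigma_U,\delta_U)$ with finite states $Q_U$, initial state $\mathit{init}_U$, finite input alphabet $\Sigma_U$ and guarded transitions $\delta_U\subseteq Q_U\times\Sigma_U\times 2^{Q_A\cup Q_B}\times Q_U$; templates $A,B$ have disjoint state sets and disjoint alphabets. The system $(A,B)^{(1,n)}$ consists of one copy of $A$ and $n$ copies $B_1,\dots,B_n$ of $B$; a global state $s$ gives each process a local state, a global input $e$ gives each process an input letter, and initially all processes are in their initial states. In a conjunctive system a guard $g$ is satisfied for process $p$ in $s$ iff every process $p'\ne p$ has $s(p')\in g$, and $\mathit{init}_A,\mathit{init}_B$ belong to every guard. A local transition $(q,\sigma,g,q')$ of $p$ is enabled for $(s,e)$ if $s(p)=q$, $e(p)=\sigma$ and $g$ is satisfied for $p$ in $s$; a global step changes the state of exactly one process along an enabled transition. A path is a sequence of configurations $(s_1,e_1,p_1),(s_2,e_2,p_2),\dots$ where $p_t$ makes the step from $s_t$ to $s_{t+1}$ under $e_t$, a configuration $(s,e,\bot)$ occurs (as the last one) exactly when all processes are disabled, and $e_{t+1}(p)=e_t(p)$ for every process $p$ not moving at moment $t$. A run is a maximal path from the initial state. A run is unconditionally fair if it is infinite and every process moves infinitely often; it is initializing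 if every process that moves infinitely often visits its template's initial state infinitely often. $h(A,B_1)$ is an LTL formula without next operator over atomic propositions from $Q_A\cup\Sigma_A$ and $(Q_B\cup\Sigma_B)\times\{1\}$, interpreted on the local states and inputs of $A$ and $B_1$ along the run. *)

theory Defs
  imports Main
begin

text \<open>Guards are sets of
states of A or B; to make the state sets of A and B disjoint, a guard is a set of
elements of the sum type 'qa + 'qb (Inl for A-states, Inr for B-states).\<close>

record ('q, 's, 'g) template =
  states :: "'q set"
  init   :: 'q
  alph   :: "'s set"
  trans  :: "('q \<times> 's \<times> 'g set \<times> 'q) set"

type_synonym ('qa, 'sa, 'qb) templA = "('qa, 'sa, 'qa + 'qb) template"
type_synonym ('qb, 'sb, 'qa) templB = "('qb, 'sb, 'qa + 'qb) template"

definition guard_universe ::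
  "('qa, 'sa, 'qa + 'qb) template \<Rightarrow> ('qb, 'sb, 'qa + 'qb) template \<Rightarrow> ('qa + 'qb) set" where
  "guard_universe A B = Inl ` states A \<union> Inr ` states B"

definition template_wf :: "('q, 's, 'g) template \<Rightarrow> 'g set \<Rightarrow> bool" where
  "template_wf U G \<longleftrightarrow> finite (states U) \<and> init U \<in> states U \<and> finite (alph U) \<and>
     (\<forall>(q, \<sigma>, g, q') \<in> trans U. q \<in> states U \<and> \<sigma> \<in> alph U \<and> g \<subseteq> G \<and> q' \<in> states U)"

definition conjunctive ::
  "('qa, 'sa, 'qa + 'qb) template \<Rightarrow> ('qb, 'sb, 'qa + 'qb) template \<Rightarrow> bool" where
  "conjunctive A B \<longleftrightarrow>
     (\<forall>(q, \<sigma>, g, q') \<in> trans A. Inl (init A) \<in> g \<and> Inr (init B) \<in> g) \<and>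
     (\<forall>(q, \<sigma>, g, q') \<in> trans B. Inl (init A) \<in> g \<and> Inr (init B) \<in> g)"

datatype proc = PA | PB nat

definition procs :: "nat \<Rightarrow> proc set" where
  "procs n = insert PA (PB ` {1..n})"

text \<open>Global state: local state of A and of each B_i; global input likewise.
Only indices 1..n are meaningful.\<close>
type_synonym ('qa, 'qb) gstate = "'qa \<times> (nat \<Rightarrow> 'qb)"
type_synonym ('sa, 'sb) ginput = "'sa \<times> (nat \<Rightarrow> 'sb)"

fun guard_sat :: "nat \<Rightarrow> ('qa, 'qb) gstate \<Rightarrow> proc \<Rightarrow> ('qa + 'qb) set \<Rightarrow> bool" where
  "guard_sat n s PA g \<longleftrightarrow> (\<forall>i\<in>{1..n}. Inr (snd s i) \<in> g)"
| "guard_sat n s (PB j) g \<longleftrightarrow> Inl (fst s) \<in> g \<and> (\<forall>i\<in>{1..n}. i \<noteq> j \<longrightarrow> Inr (snd s i) \<in> g)"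

fun gstep ::
  "('qa, 'sa, 'qa + 'qb) template \<Rightarrow> ('qb, 'sb, 'qa + 'qb) template \<Rightarrow> nat \<Rightarrow>
   ('qa, 'qb) gstate \<Rightarrow> ('sa, 'sb) ginput \<Rightarrow> proc \<Rightarrow> ('qa, 'qb) gstate \<Rightarrow> bool" where
  "gstep A B n s e PA s' \<longleftrightarrow>
     (\<exists>g q'. (fst s, fst e, g, q') \<in> trans A \<and> guard_sat n s PA g \<and> s' = (q', snd s))"
| "gstep A B n s e (PB j) s' \<longleftrightarrow> j \<in> {1..n} \<and>
     (\<exists>g q'. (snd s j, snd e j, g, q') \<in> trans B \<and> guard_sat n s (PB j) g \<and>
        s' = (fst s, (snd s)(j := q')))"

definition valid_input ::
  "('qa, 'sa, 'qa + 'qb) template \<Rightarrow> ('qb, 'sb, 'qa + 'qb) template \<Rightarrow> nat \<Rightarrow>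
   ('sa, 'sb) ginput \<Rightarrow> bool" where
  "valid_input A B n e \<longleftrightarrow> fst e \<in> alph A \<and> (\<forall>i\<in>{1..n}. snd e i \<in> alph B)"

text \<open>Infinite paths are automatically maximal. (Finite
runs ending in a deadlock configuration are never unconditionally fair, so only
infinite runs are needed.)\<close>
definition inf_run ::
  "('qa, 'sa, 'qa + 'qb) template \<Rightarrow> ('qb, 'sb, 'qa + 'qb) template \<Rightarrow> nat \<Rightarrow>
   (nat \<Rightarrow> ('qa, 'qb) gstate \<times> ('sa, 'sb) ginput \<times> proc) \<Rightarrow> bool" where
  "inf_run A B n \<rho> \<longleftrightarrow>
     fst (\<rho> 0) = (init A, \<lambda>_. init B) \<and>
     (\<forall>t. valid_input A B n (fst (snd (\<rho> t)))) \<and>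
     (\<forall>t. gstep A B n (fst (\<rho> t)) (fst (snd (\<rho> t))) (snd (snd (\<rho> t))) (fst (\<rho> (Suc t)))) \<and>
     (\<forall>t. (snd (snd (\<rho> t)) \<noteq> PA \<longrightarrow> fst (fst (snd (\<rho> (Suc t)))) = fst (fst (snd (\<rho> t)))) \<and>
          (\<forall>i\<in>{1..n}. snd (snd (\<rho> t)) \<noteq> PB i \<longrightarrow>
              snd (fst (snd (\<rho> (Suc t)))) i = snd (fst (snd (\<rho> t))) i))"

definition uncond_fair :: "nat \<Rightarrow> (nat \<Rightarrow> 'gs \<times> 'ge \<times> proc) \<Rightarrow> bool" where
  "uncond_fair n \<rho> \<longleftrightarrow> (\<forall>p\<in>procs n. \<exists>\<^sub>\<infinity>t. snd (snd (\<rho> t)) = p)"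

fun at_init ::
  "('qa, 'sa, 'qa + 'qb) template \<Rightarrow> ('qb, 'sb, 'qa + 'qb) template \<Rightarrow>
   ('qa, 'qb) gstate \<Rightarrow> proc \<Rightarrow> bool" where
  "at_init A B s PA \<longleftrightarrow> fst s = init A"
| "at_init A B s (PB j) \<longleftrightarrow> snd s j = init B"

definition initializing ::
  "('qa, 'sa, 'qa + 'qb) template \<Rightarrow> ('qb, 'sb, 'qa + 'qb) template \<Rightarrow> nat \<Rightarrow>
   (nat \<Rightarrow> ('qa, 'qb) gstate \<times> ('sa, 'sb) ginput \<times> proc) \<Rightarrow> bool" where
  "initializing A B n \<rho> \<longleftrightarrow>
     (\<forall>p\<in>procs n. (\<exists>\<^sub>\<infinity>t. snd (snd (\<rho> t)) = p) \<longrightarrow> (\<exists>\<^sub>\<infinity>t. at_init A B (fst (\<rho> t)) p))"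

datatype ('qa, 'sa, 'qb, 'sb) atom = StA 'qa | InA 'sa | StB1 'qb | InB1 'sb

datatype 'ap ltlx =
    LTrue
  | Prop 'ap
  | LNot "'ap ltlx"
  | LAnd "'ap ltlx" "'ap ltlx"
  | LOr "'ap ltlx" "'ap ltlx"
  | Until "'ap ltlx" "'ap ltlx"
  | Release "'ap ltlx" "'ap ltlx"

fun atom_holds :: "('qa, 'sa, 'qb, 'sb) atom \<Rightarrow> ('qa, 'qb) gstate \<Rightarrow> ('sa, 'sb) ginput \<Rightarrow> bool" where
  "atom_holds (StA q) s e \<longleftrightarrow> fst s = q"
| "atom_holds (InA \<sigma>) s e \<longleftrightarrow> fst e = \<sigma>"
| "atom_holds (StB1 q) s e \<longleftrightarrow> snd s 1 = q"
| "atom_holds (InB1 \<sigma>) s e \<longleftrightarrow> snd e 1 = \<sigma>"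

fun ltl_holds ::
  "(nat \<Rightarrow> ('qa, 'qb) gstate \<times> ('sa, 'sb) ginput \<times> proc) \<Rightarrow> nat \<Rightarrow>
   ('qa, 'sa, 'qb, 'sb) atom ltlx \<Rightarrow> bool" where
  "ltl_holds \<rho> t LTrue = True"
| "ltl_holds \<rho> t (Prop a) = atom_holds a (fst (\<rho> t)) (fst (snd (\<rho> t)))"
| "ltl_holds \<rho> t (LNot \<phi>) = (\<not> ltl_holds \<rho> t \<phi>)"
| "ltl_holds \<rho> t (LAnd \<phi> \<psi>) = (ltl_holds \<rho> t \<phi> \<and> ltl_holds \<rho> t \<psi>)"
| "ltl_holds \<rho> t (LOr \<phi> \<psi>) = (ltl_holds \<rho> t \<phi> \<or> ltl_holds \<rho> t \<psi>)"
| "ltl_holds \<rho> t (Until \<phi> \<psi>) =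
     (\<exists>k\<ge>t. ltl_holds \<rho> k \<psi> \<and> (\<forall>j. t \<le> j \<and> j < k \<longrightarrow> ltl_holds \<rho> j \<phi>))"
| "ltl_holds \<rho> t (Release \<phi> \<psi>) =
     (\<forall>k\<ge>t. ltl_holds \<rho> k \<psi> \<or> (\<exists>j. t \<le> j \<and> j < k \<and> ltl_holds \<rho> j \<phi>))"

definition run_sat ::
  "(nat \<Rightarrow> ('qa, 'qb) gstate \<times> ('sa, 'sb) ginput \<times> proc) \<Rightarrow>
   ('qa, 'sa, 'qb, 'sb) atom ltlx \<Rightarrow> bool" where
  "run_sat \<rho> h \<longleftrightarrow> ltl_holds \<rho> 0 h"

end

theory Submission
  imports Defs "HOL-Library.Infinite_Set"
begin

text \<open>Project a fair initializing run of (A,B)^(1,n) onto \<open>A\<close> and \<open>B\<^sub>1\<close>: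
  keep only the moments at which \<open>A\<close> or \<open>B\<^sub>1\<close> moves, and put
  \<open>B\<^sub>2, \<dots>, B\<^sub>n\<close> back into their initial state. A guard must hold
  of every other process, so removing processes only makes guards easier to satisfy,
  and every kept step is a step of (A,B)^(1,1). Between two kept moments the local
  states and inputs of \<open>A\<close> and \<open>B\<^sub>1\<close> do not change, so the projection is
  stutter-equivalent to the original run on the propositions of \<open>h\<close>, and LTL without
  next cannot distinguish stutter-equivalent runs. Fairness and initialization of
  \<open>A\<close> and \<open>B\<^sub>1\<close> survive the projection because they only concern the kept
  moments and the observed local states.\<close>

lemma mono_surj_least_preimage:
  fixes b :: "nat \<Rightarrow> nat"
  assumes "mono b" and "surj b" and "b t \<le> k"
  obtains u where "t \<le> u" and "b u = k" and "\<And>j. t \<le> j \<Longrightarrow> j < u \<Longrightarrow> b j < k"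
proof -
  obtain v where "b v = k"
    using \<open>surj b\<close> by (metis surjD)
  have "b (max t v) = k"
  proof (cases "t \<le> v")
    case False
    then have "b v \<le> b t"
      using \<open>mono b\<close> by (simp add: monoD)
    then show ?thesis
      using False \<open>b v = k\<close> \<open>b t \<le> k\<close> by (simp add: max_def)
  qed (simp add: \<open>b v = k\<close> max_def)
  then have ex: "\<exists>u. t \<le> u \<and> b u = k"
    by (metis max.cobounded1)
  define u where "u = (LEAST u. t \<le> u \<and> b u = k)"
  have "t \<le> u" and "b u = k"
    using LeastI_ex[OF ex] unfolding u_def by auto
  moreover have "b j < k" if "t \<le> j" and "j < u" for j
  proof -
    have "b j \<noteq> k"
      using not_less_Least[of j "\<lambda>u. t \<le> u \<and> b u = k"] that unfolding u_def by blast
    moreover have "b j \<le> b u"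
      using \<open>j < u\<close> \<open>mono b\<close> by (simp add: monoD)
    ultimately show ?thesis
      using \<open>b u = k\<close> by simp
  qed
  ultimately show ?thesis
    using that by blast
qed

lemma until_stutter:
  fixes b :: "nat \<Rightarrow> nat"
  assumes "mono b" and "surj b"
  shows "(\<exists>k\<ge>t. Q (b k) \<and> (\<forall>j. t \<le> j \<and> j < k \<longrightarrow> P (b j))) \<longleftrightarrow>
         (\<exists>k\<ge>b t. Q k \<and> (\<forall>j. b t \<le> j \<and> j < k \<longrightarrow> P j))"
proof
  assume "\<exists>k\<ge>t. Q (b k) \<and> (\<forall>j. t \<le> j \<and> j < k \<longrightarrow> P (b j))"
  then obtain k where "t \<le> k" and "Q (b k)" and P: "\<And>j. t \<le> j \<Longrightarrow> j < k \<Longrightarrow> P (b j)"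
    by blast
  have "P i" if "b t \<le> i" and "i < b k" for i
  proof -
    obtain j where "t \<le> j" and "b j = i"
      using mono_surj_least_preimage[OF assms \<open>b t \<le> i\<close>] by metis
    moreover have "j < k"
      using \<open>b j = i\<close> \<open>i < b k\<close> \<open>mono b\<close> by (metis monoD not_le)
    ultimately show ?thesis
      using P by blast
  qed
  moreover have "b t \<le> b k"
    using \<open>t \<le> k\<close> \<open>mono b\<close> by (simp add: monoD)
  ultimately show "\<exists>k\<ge>b t. Q k \<and> (\<forall>j. b t \<le> j \<and> j < k \<longrightarrow> P j)"
    using \<open>Q (b k)\<close> by blast
next
  assume "\<exists>k\<ge>b t. Q k \<and> (\<forall>j. b t \<le> j \<and> j < k \<longrightarrow> P j)"
  then obtain k where "b t \<le> k" and "Q k" and P: "\<And>j. b t \<le> j \<Longrightarrow> j < k \<Longrightarrow> P j"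
    by blast
  obtain u where "t \<le> u" and "b u = k" and below: "\<And>j. t \<le> j \<Longrightarrow> j < u \<Longrightarrow> b j < k"
    using mono_surj_least_preimage[OF assms \<open>b t \<le> k\<close>] by blast
  have "P (b j)" if "t \<le> j" and "j < u" for j
    using P[OF _ below[OF that]] \<open>t \<le> j\<close> \<open>mono b\<close> by (simp add: monoD)
  then show "\<exists>k\<ge>t. Q (b k) \<and> (\<forall>j. t \<le> j \<and> j < k \<longrightarrow> P (b j))"
    using \<open>t \<le> u\<close> \<open>b u = k\<close> \<open>Q k\<close> by blast
qed

lemma INFM_mono_surj:
  fixes b :: "nat \<Rightarrow> nat"
  assumes "mono b" and "surj b" and "\<exists>\<^sub>\<infinity>t. P (b t)"
  shows "\<exists>\<^sub>\<infinity>k. P k"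
  unfolding INFM_nat
proof
  fix m
  obtain t0 where "b t0 = Suc m"
    using \<open>surj b\<close> by (metis surjD)
  obtain t where "t0 < t" and "P (b t)"
    using assms(3) unfolding INFM_nat by blast
  then have "m < b t"
    using \<open>b t0 = Suc m\<close> \<open>mono b\<close> by (metis Suc_le_lessD less_imp_le monoD)
  then show "\<exists>k>m. P k"
    using \<open>P (b t)\<close> by blast
qed

definition index_from :: "nat set \<Rightarrow> nat \<Rightarrow> nat" where
  "index_from M t = (LEAST k. t \<le> enumerate M k)"

lemma index_from_le_iff:
  assumes "infinite M"
  shows "index_from M t \<le> k \<longleftrightarrow> t \<le> enumerate M k"
proof
  have "t \<le> enumerate M (index_from M t)"
    unfolding index_from_def by (rule LeastI) (rule le_enumerate[OF assms])
  then show "index_from M t \<le> k \<Longrightarrow> t \<le> enumerate M k"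
    using assms by (meson enumerate_mono_le_iff order_trans)
qed (simp add: index_from_def Least_le)

lemma index_from_0 [simp]: "index_from M 0 = 0"
  by (simp add: index_from_def)

lemma enumerate_index_from_ge:
  assumes "infinite M"
  shows "t \<le> enumerate M (index_from M t)"
  using index_from_le_iff[OF assms] by blast

lemma index_from_enumerate:
  assumes "infinite M"
  shows "index_from M (enumerate M k) = k"
  using index_from_le_iff[OF assms] enumerate_mono_le_iff[OF assms]
  by (meson order.antisym order_refl)

lemma index_from_Suc_enumerate:
  assumes "infinite M"
  shows "index_from M (Suc (enumerate M k)) = Suc k"
  using index_from_le_iff[OF assms] enumerate_mono_iff[OF assms]
  by (metis Suc_le_eq order.antisym order_refl)

lemma mono_index_from:
  assumes "infinite M"
  shows "mono (index_from M)"
  using index_from_le_iff[OF assms] by (meson monoI order_refl order_trans)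

lemma surj_index_from:
  assumes "infinite M"
  shows "surj (index_from M)"
  using index_from_enumerate[OF assms] by (metis surjI)

lemma enumerate_index_from_in:
  assumes "infinite M" and "t \<in> M"
  shows "enumerate M (index_from M t) = t"
  using enumerate_Ex[OF assms] index_from_enumerate[OF assms(1)] by metis

lemma enumerate_index_from_stutter:
  assumes "infinite M" and stutter: "\<And>u. u \<notin> M \<Longrightarrow> f (Suc u) = f u"
  shows "f (enumerate M (index_from M t)) = f t"
  using enumerate_index_from_ge[OF assms(1)]
proof (induction rule: dec_induct)
  case (step u)
  have "u \<notin> M"
  proof
    assume "u \<in> M"
    then have "index_from M t \<le> index_from M u"
      using \<open>t \<le> u\<close> mono_index_from[OF assms(1)] by (simp add: monoD)
    then show False
      using \<open>u \<in> M\<close> \<open>u < enumerate M (index_from M t)\<close> enumerate_index_from_in[OF assms(1)]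
      by (metis enumerate_mono_le_iff[OF assms(1)] not_le)
  qed
  then show ?case
    using step.IH stutter by simp
qed simp

definition view_A_B1 :: "('qa, 'qb) gstate \<times> ('sa, 'sb) ginput \<times> proc \<Rightarrow> 'qa \<times> 'qb \<times> 'sa \<times> 'sb"
  where "view_A_B1 c = (fst (fst c), snd (fst c) 1, fst (fst (snd c)), snd (fst (snd c)) 1)"

lemma atom_holds_view_A_B1_cong:
  assumes "view_A_B1 c = view_A_B1 c'"
  shows "atom_holds a (fst c) (fst (snd c)) = atom_holds a (fst c') (fst (snd c'))"
  using assms by (cases a) (auto simp: view_A_B1_def)

lemma ltl_holds_stutter:
  fixes b :: "nat \<Rightarrow> nat"
  assumes "mono b" and "surj b" and view: "\<And>t. view_A_B1 (\<rho> t) = view_A_B1 (\<sigma> (b t))"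
  shows "ltl_holds \<rho> t \<phi> = ltl_holds \<sigma> (b t) \<phi>"
proof (induction \<phi> arbitrary: t)
  case (Prop a)
  show ?case
    using atom_holds_view_A_B1_cong[OF view] by simp
next
  case (Until \<phi> \<psi>)
  show ?case
    using until_stutter[OF assms(1,2), where Q = "\<lambda>k. ltl_holds \<sigma> k \<psi>"
        and P = "\<lambda>k. ltl_holds \<sigma> k \<phi>"] by (simp add: Until.IH)
next
  case (Release \<phi> \<psi>)
  have "(\<exists>k\<ge>t. \<not> ltl_holds \<rho> k \<psi> \<and> (\<forall>j. t \<le> j \<and> j < k \<longrightarrow> \<not> ltl_holds \<rho> j \<phi>)) \<longleftrightarrow>
        (\<exists>k\<ge>b t. \<not> ltl_holds \<sigma> k \<psi> \<and> (\<forall>j. b t \<le> j \<and> j < k \<longrightarrow> \<not> ltl_holds \<sigma> j \<phi>))"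
    using until_stutter[OF assms(1,2), where Q = "\<lambda>k. \<not> ltl_holds \<sigma> k \<psi>"
        and P = "\<lambda>k. \<not> ltl_holds \<sigma> k \<phi>"] by (simp add: Release.IH)
  then show ?case
    by simp blast
qed simp_all

definition restrict_B1 :: "('qb, 'sb, 'g) template \<Rightarrow> ('qa, 'qb) gstate \<Rightarrow> ('qa, 'qb) gstate" where
  "restrict_B1 B s = (fst s, (\<lambda>_. init B)(1 := snd s 1))"

lemma gstep_restrict_B1:
  assumes "1 \<le> n" and "p \<in> {PA, PB 1}" and "gstep A B n s e p s'"
  shows "gstep A B 1 (restrict_B1 B s) e p (restrict_B1 B s')"
proof (cases "p = PA")
  case True
  then obtain g q' where "(fst s, fst e, g, q') \<in> trans A" and "guard_sat n s PA g"
    and "s' = (q', snd s)"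
    using assms(3) by auto
  then show ?thesis
    using True \<open>1 \<le> n\<close> by (auto simp: restrict_B1_def)
next
  case False
  then obtain g q' where "(snd s 1, snd e 1, g, q') \<in> trans B" and "guard_sat n s (PB 1) g"
    and "s' = (fst s, (snd s)(1 := q'))"
    using assms(2,3) by auto
  then show ?thesis
    using False assms(2) by (auto simp: restrict_B1_def)
qed

lemma view_A_B1_Suc_other:
  assumes "inf_run A B n \<rho>" and "1 \<le> n" and other: "snd (snd (\<rho> t)) \<notin> {PA, PB 1}"
  shows "view_A_B1 (\<rho> (Suc t)) = view_A_B1 (\<rho> t)"
proof -
  obtain s e p where \<rho>t: "\<rho> t = (s, e, p)"
    by (metis prod.collapse)
  obtain s' e' p' where \<rho>Suc: "\<rho> (Suc t) = (s', e', p')"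
    by (metis prod.collapse)
  have step: "gstep A B n s e p s'"
    and input_A: "p \<noteq> PA \<longrightarrow> fst e' = fst e"
    and input_B1: "p \<noteq> PB 1 \<longrightarrow> snd e' 1 = snd e 1"
    using assms(1,2) \<rho>t \<rho>Suc unfolding inf_run_def
    by (metis fst_conv snd_conv atLeastAtMost_iff order_refl)+
  have "fst s' = fst s \<and> snd s' 1 = snd s 1"
    using step other \<rho>t by (cases p) auto
  then show ?thesis
    using input_A input_B1 other \<rho>t \<rho>Suc unfolding view_A_B1_def by simp
qed

locale fair_run =
  fixes A :: "('qa, 'sa, 'qa + 'qb) template"
    and B :: "('qb, 'sb, 'qa + 'qb) template"
    and n :: nat
    and \<rho> :: "nat \<Rightarrow> ('qa, 'qb) gstate \<times> ('sa, 'sb) ginput \<times> proc"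
  assumes run: "inf_run A B n \<rho>" and n_ge_1: "1 \<le> n" and fair: "uncond_fair n \<rho>"
begin

definition moves_A_B1 :: "nat set" where
  "moves_A_B1 = {t. snd (snd (\<rho> t)) \<in> {PA, PB 1}}"

abbreviation move_time :: "nat \<Rightarrow> nat" where
  "move_time \<equiv> enumerate moves_A_B1"

abbreviation move_count :: "nat \<Rightarrow> nat" where
  "move_count \<equiv> index_from moves_A_B1"

definition proj_run :: "nat \<Rightarrow> ('qa, 'qb) gstate \<times> ('sa, 'sb) ginput \<times> proc" where
  "proj_run k = apfst (restrict_B1 B) (\<rho> (move_time k))"

lemma fair_A_B1: "p \<in> {PA, PB 1} \<Longrightarrow> \<exists>\<^sub>\<infinity>t. snd (snd (\<rho> t)) = p"
  using fair n_ge_1 unfolding uncond_fair_def procs_def by auto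

lemma infinite_moves_A_B1: "infinite moves_A_B1"
proof -
  have "infinite {t. snd (snd (\<rho> t)) = PA}"
    using fair_A_B1[of PA] by (simp add: INFM_iff_infinite)
  then show ?thesis
    unfolding moves_A_B1_def by (rule infinite_super[rotated]) auto
qed

lemma view_A_B1_proj_run: "view_A_B1 (proj_run k) = view_A_B1 (\<rho> (move_time k))"
  by (simp add: proj_run_def view_A_B1_def restrict_B1_def apfst_def map_prod_def split_beta)

lemma view_A_B1_move_time_move_count: "view_A_B1 (\<rho> (move_time (move_count t))) = view_A_B1 (\<rho> t)"
proof (rule enumerate_index_from_stutter[OF infinite_moves_A_B1])
  show "view_A_B1 (\<rho> (Suc u)) = view_A_B1 (\<rho> u)" if "u \<notin> moves_A_B1" for u
    using view_A_B1_Suc_other[OF run n_ge_1] that unfolding moves_A_B1_def by blast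
qed

lemma view_A_B1_proj_run_move_count: "view_A_B1 (proj_run (move_count t)) = view_A_B1 (\<rho> t)"
  using view_A_B1_move_time_move_count by (simp add: view_A_B1_proj_run)

lemma state_proj_run_move_count: "fst (proj_run (move_count t)) = restrict_B1 B (fst (\<rho> t))"
  using view_A_B1_move_time_move_count[of t]
  by (simp add: proj_run_def view_A_B1_def restrict_B1_def)

lemma inf_run_proj_run: "inf_run A B 1 proj_run"
  unfolding inf_run_def
proof (intro conjI allI)
  show "fst (proj_run 0) = (init A, \<lambda>_. init B)"
    using state_proj_run_move_count[of 0] run
    by (simp add: inf_run_def restrict_B1_def fun_eq_iff)
next
  fix k
  let ?t = "move_time k"
  have moving: "snd (snd (\<rho> ?t)) \<in> {PA, PB 1}"
    using enumerate_in_set[OF infinite_moves_A_B1] unfolding moves_A_B1_def by blast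
  have next_state: "fst (proj_run (Suc k)) = restrict_B1 B (fst (\<rho> (Suc ?t)))"
    and next_view: "view_A_B1 (proj_run (Suc k)) = view_A_B1 (\<rho> (Suc ?t))"
    using state_proj_run_move_count[of "Suc ?t"] view_A_B1_proj_run_move_count[of "Suc ?t"]
    by (simp_all add: index_from_Suc_enumerate[OF infinite_moves_A_B1])
  show "valid_input A B 1 (fst (snd (proj_run k)))"
    using run n_ge_1 unfolding inf_run_def valid_input_def by (simp add: proj_run_def)
  have "gstep A B n (fst (\<rho> ?t)) (fst (snd (\<rho> ?t))) (snd (snd (\<rho> ?t))) (fst (\<rho> (Suc ?t)))"
    using run unfolding inf_run_def by blast
  then show "gstep A B 1 (fst (proj_run k)) (fst (snd (proj_run k))) (snd (snd (proj_run k)))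
      (fst (proj_run (Suc k)))"
    unfolding next_state using gstep_restrict_B1[OF n_ge_1 moving] by (simp add: proj_run_def)
  have "snd (snd (\<rho> ?t)) \<noteq> PA \<longrightarrow> fst (fst (snd (\<rho> (Suc ?t)))) = fst (fst (snd (\<rho> ?t)))"
    and "snd (snd (\<rho> ?t)) \<noteq> PB 1 \<longrightarrow> snd (fst (snd (\<rho> (Suc ?t)))) 1 = snd (fst (snd (\<rho> ?t))) 1"
    using run n_ge_1 unfolding inf_run_def by auto
  then show "snd (snd (proj_run k)) \<noteq> PA \<longrightarrow>
        fst (fst (snd (proj_run (Suc k)))) = fst (fst (snd (proj_run k)))"
    and "\<forall>i\<in>{1..1}. snd (snd (proj_run k)) \<noteq> PB i \<longrightarrow>
        snd (fst (snd (proj_run (Suc k)))) i = snd (fst (snd (proj_run k))) i"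
    using next_view by (simp_all add: proj_run_def view_A_B1_def)
qed

lemma mono_move_count: "mono move_count"
  and surj_move_count: "surj move_count"
  using mono_index_from surj_index_from infinite_moves_A_B1 by blast+

lemma uncond_fair_proj_run: "uncond_fair 1 proj_run"
  unfolding uncond_fair_def procs_def
proof (intro ballI)
  fix p :: proc
  assume "p \<in> insert PA (PB ` {1..1})"
  then have p: "p \<in> {PA, PB 1}"
    by simp
  have kept: "snd (snd (proj_run (move_count t))) = p" if "snd (snd (\<rho> t)) = p" for t
  proof -
    have "t \<in> moves_A_B1"
      using that p unfolding moves_A_B1_def by simp
    then show ?thesis
      using that enumerate_index_from_in[OF infinite_moves_A_B1] by (simp add: proj_run_def)
  qed
  have "\<exists>\<^sub>\<infinity>t. snd (snd (proj_run (move_count t))) = p"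
    by (rule INFM_mono[OF fair_A_B1[OF p] kept])
  then show "\<exists>\<^sub>\<infinity>k. snd (snd (proj_run k)) = p"
    by (rule INFM_mono_surj[OF mono_move_count surj_move_count])
qed

lemma initializing_proj_run:
  assumes "initializing A B n \<rho>"
  shows "initializing A B 1 proj_run"
  unfolding initializing_def procs_def
proof (intro ballI impI)
  fix p :: proc
  assume "p \<in> insert PA (PB ` {1..1})"
  then have p: "p \<in> {PA, PB 1}"
    by simp
  have at_init_view: "at_init A B (fst c) p \<longleftrightarrow> at_init A B (fst c') p"
    if "view_A_B1 c = view_A_B1 c'" for c c' :: "('qa, 'qb) gstate \<times> ('sa, 'sb) ginput \<times> proc"
    using that p by (auto simp: view_A_B1_def)
  have "\<exists>\<^sub>\<infinity>t. at_init A B (fst (\<rho> t)) p"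
    using assms fair_A_B1[OF p] p n_ge_1 unfolding initializing_def procs_def by auto
  then show "\<exists>\<^sub>\<infinity>k. at_init A B (fst (proj_run k)) p"
    using INFM_mono_surj[OF mono_move_count surj_move_count,
        of "\<lambda>k. at_init A B (fst (proj_run k)) p"]
    by (simp add: at_init_view[OF view_A_B1_proj_run_move_count])
qed

lemma run_sat_proj_run:
  assumes "run_sat \<rho> h"
  shows "run_sat proj_run h"
  using ltl_holds_stutter[OF mono_move_count surj_move_count, of \<rho> proj_run 0 h]
    view_A_B1_proj_run_move_count assms
  by (simp add: run_sat_def)

end

theorem mainTheorem12:
  fixes A :: "('qa, 'sa, 'qa + 'qb) template"
    and B :: "('qb, 'sb, 'qa + 'qb) template"
    and h :: "('qa, 'sa, 'qb, 'sb) atom ltlx"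
    and n :: nat
    and \<rho> :: "nat \<Rightarrow> ('qa, 'qb) gstate \<times> ('sa, 'sb) ginput \<times> proc"
  assumes "template_wf A (guard_universe A B)"
    and "template_wf B (guard_universe A B)"
    and "conjunctive A B"
    and "n \<ge> 1"
    and "inf_run A B n \<rho>" and "uncond_fair n \<rho>" and "initializing A B n \<rho>"
    and "run_sat \<rho> h"
  shows "\<exists>\<rho>'. inf_run A B 1 \<rho>' \<and> uncond_fair 1 \<rho>' \<and> initializing A B 1 \<rho>' \<and> run_sat \<rho>' h"
proof -
  interpret fair_run A B n \<rho>
    using assms(4-6) by unfold_locales
  show ?thesis
    using inf_run_proj_run uncond_fair_proj_run initializing_proj_run[OF assms(7)]
      run_sat_proj_run[OF assms(8)] by blast
qed

end
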